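(* Let $d=4k+1$ with $k\ge3$. Consider the families (all indices read modulo $d$) $C^0=\{L^0_{1+i,2k+i}\}_{i=0}^{k}\cup\{L^0_{k+i,k+i}\}_{i=2}^{k-1}\cup\{L^0_{2k+i,1+i}\}_{i=0}^{k}\cup\{L^0_{3k+i,3k+i}\}_{i=1}^{k+1}$, $C^1=\{L^1_{2k+1,2k+i}\}_{i=1}^{k-1}\cup\{L^1_{3k+1,2k}\}\cup\{L^1_{1,k+i}\}_{i=0}^{k-1}\cup\{L^1_{2k+1,i}\}_{i=0}^{k-1}\cup\{L^1_{3k+2,4k}\}\cup\{L^1_{2,3k+i}\}_{i=0}^{k-1}$, $C^2=\{L^2_{1,i}\}_{i=0}^{k-1}\cup\{L^2_{2k+2,3k+i}\}_{i=0}^{k}\cup\{L^2_{2,2k+i}\}_{i=0}^{k-1}\cup\{L^2_{2k+2,k+i}\}_{i=0}^{k-1}$. Then $C^0\cup C^1\cup C^2$ consists of $3d$ pairwise disjoint lines on ${\rm F}_d$.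
   Context: ${\rm F}_d\subset\mathbb{P}^3(\mathbb{C})$ is the surface $x^d-y^d-z^d+w^d=0$ ($d$ odd). Fix a primitive $d$-th root of unity $\eta$ and put $v=-1$. For integers $k,i$ (taken modulo $d$) define the lines $L^0_{k,i}:\{y=\eta^i x,\ w=\eta^k z\}$, $L^1_{k,i}:\{x=\eta^{k+i}z,\ y=\eta^i w\}$, $L^2_{k,i}:\{x=v\eta^i w,\ y=v\eta^{k+i}z\}$, all lying on ${\rm F}_d$. *)

theory Defs
  imports Complex_Main
begin

text \<open>Points of P^3(C) are represented by their homogeneous coordinate vectors
(x,y,z,w) in C^4; a projective line is represented by the 2-dimensional linear
subspace of C^4 (its cone). Two projective lines are disjoint iff their cones
meet only in the zero vector.\<close>

type_synonym vec4 = "complex \<times> complex \<times> complex \<times> complex"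

definition Fermat :: "nat \<Rightarrow> vec4 set" where
  "Fermat d = {(x,y,z,w). x^d - y^d - z^d + w^d = 0}"

definition vv :: complex where "vv = -1"

definition L0 :: "complex \<Rightarrow> int \<Rightarrow> int \<Rightarrow> vec4 set" where
  "L0 \<eta> k i = {(x,y,z,w). y = \<eta> powi i * x \<and> w = \<eta> powi k * z}"

definition L1 :: "complex \<Rightarrow> int \<Rightarrow> int \<Rightarrow> vec4 set" where
  "L1 \<eta> k i = {(x,y,z,w). x = \<eta> powi (k+i) * z \<and> y = \<eta> powi i * w}"

definition L2 :: "complex \<Rightarrow> int \<Rightarrow> int \<Rightarrow> vec4 set" where
  "L2 \<eta> k i = {(x,y,z,w). x = vv * \<eta> powi i * w \<and> y = vv * \<eta> powi (k+i) * z}"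

definition C0 :: "complex \<Rightarrow> int \<Rightarrow> vec4 set set" where
  "C0 \<eta> k =
     (\<lambda>i. L0 \<eta> (1+i) (2*k+i)) ` {0..k}
   \<union> (\<lambda>i. L0 \<eta> (k+i) (k+i)) ` {2..k-1}
   \<union> (\<lambda>i. L0 \<eta> (2*k+i) (1+i)) ` {0..k}
   \<union> (\<lambda>i. L0 \<eta> (3*k+i) (3*k+i)) ` {1..k+1}"

definition C1 :: "complex \<Rightarrow> int \<Rightarrow> vec4 set set" where
  "C1 \<eta> k =
     (\<lambda>i. L1 \<eta> (2*k+1) (2*k+i)) ` {1..k-1}
   \<union> {L1 \<eta> (3*k+1) (2*k)}
   \<union> (\<lambda>i. L1 \<eta> 1 (k+i)) ` {0..k-1}
   \<union> (\<lambda>i. L1 \<eta> (2*k+1) i) ` {0..k-1}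
   \<union> {L1 \<eta> (3*k+2) (4*k)}
   \<union> (\<lambda>i. L1 \<eta> 2 (3*k+i)) ` {0..k-1}"

definition C2 :: "complex \<Rightarrow> int \<Rightarrow> vec4 set set" where
  "C2 \<eta> k =
     (\<lambda>i. L2 \<eta> 1 i) ` {0..k-1}
   \<union> (\<lambda>i. L2 \<eta> (2*k+2) (3*k+i)) ` {0..k}
   \<union> (\<lambda>i. L2 \<eta> 2 (2*k+i)) ` {0..k-1}
   \<union> (\<lambda>i. L2 \<eta> (2*k+2) (k+i)) ` {0..k-1}"

end

theory Submission
  imports Defs "HOL-Number_Theory.Cong"
begin

(* Two lines of the same type meet only in 0 as soon as two linear forms in their indices are
   incongruent mod d: a and b for L^0_{a,b}, and b and a + b for L^1_{a,b} as for L^2_{a,b}.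
   Lines of different types are separated by a single form: a - b against a' for L^0_{a,b} and
   L^1_{a',b'}, a + b against a' for L^0_{a,b} and L^2_{a',b'}, a + 2b against a' + 2b' for
   L^1_{a,b} and L^2_{a',b'}.  Each family C^j is the graph of a piecewise affine function on d
   consecutive integers, so the conditions within a family say that this function is injective
   mod d, and those across families that the relevant forms avoid each other mod d.  All
   differences involved are smaller than 3d in absolute value, so every such condition is linear
   arithmetic in k. *)

lemma not_cong_if_bounded_diff:
  fixes x y m :: int
  assumes "0 < m" and "\<bar>x - y\<bar> < 3 * m" and "x - y \<notin> {-2*m, -m, 0, m, 2*m}"
  shows "\<not> [x = y] (mod m)"
proof
  assume "[x = y] (mod m)"
  then obtain q where q: "x - y = m * q" by (metis cong_iff_dvd_diff dvdE)
  have "\<bar>q\<bar> < 3"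
  proof (rule ccontr)
    assume "\<not> \<bar>q\<bar> < 3"
    then have "m * 3 \<le> m * \<bar>q\<bar>" using assms(1) by simp
    then show False using assms(1,2) q by (simp add: abs_mult)
  qed
  then have "q \<in> {-2, -1, 0, 1, 2}" by auto
  then show False using q assms(3) by auto
qed

lemma image_int_interval_shift:
  fixes f :: "int \<Rightarrow> 'a"
  assumes "\<And>i. i \<in> {m..n} \<Longrightarrow> g i = f (i + c)"
  shows "g ` {m..n} = f ` {m + c..n + c}"
proof -
  have "g ` {m..n} = (\<lambda>i. f (i + c)) ` {m..n}"
    using assms by (rule image_cong[OF refl])
  also have "\<dots> = f ` ((\<lambda>i. i + c) ` {m..n})"
    by (simp only: image_image)
  finally show ?thesis by simp
qed

lemma inj_on_if_pairwise_Int_singleton: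
  assumes "\<And>p q. p \<in> I \<Longrightarrow> q \<in> I \<Longrightarrow> p \<noteq> q \<Longrightarrow> f p \<inter> f q = {c}"
    and "\<And>p. p \<in> I \<Longrightarrow> f p \<noteq> {c}"
  shows "inj_on f I"
  using assms by (metis Int_absorb inj_onI)

lemma Int_eq_originI:
  assumes "(0,0,0,0) \<in> A" and "(0,0,0,0) \<in> B"
    and "\<And>x y z w. (x,y,z,w) \<in> A \<Longrightarrow> (x,y,z,w) \<in> B \<Longrightarrow> x = 0 \<and> y = 0 \<and> z = 0 \<and> w = 0"
  shows "A \<inter> B = {(0,0,0,0)}"
  using assms by fast

lemma L0_ne_origin: "L0 \<eta> a b \<noteq> {(0,0,0,0)}"
proof
  assume "L0 \<eta> a b = {(0,0,0,0)}"
  moreover have "(1, \<eta> powi b, 0, 0) \<in> L0 \<eta> a b" by (simp add: L0_def)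
  ultimately show False by simp
qed

lemma L1_ne_origin: "L1 \<eta> a b \<noteq> {(0,0,0,0)}"
proof
  assume "L1 \<eta> a b = {(0,0,0,0)}"
  moreover have "(\<eta> powi (a + b), 0, 1, 0) \<in> L1 \<eta> a b" by (simp add: L1_def)
  ultimately show False by simp
qed

lemma L2_ne_origin: "L2 \<eta> a b \<noteq> {(0,0,0,0)}"
proof
  assume "L2 \<eta> a b = {(0,0,0,0)}"
  moreover have "(0, vv * \<eta> powi (a + b), 1, 0) \<in> L2 \<eta> a b" by (simp add: L2_def)
  ultimately show False by simp
qed

locale primitive_root_of_unity =
  fixes d :: nat and \<eta> :: complex
  assumes order_pos: "0 < d"
    and root: "\<eta> ^ d = 1"
    and primitive: "\<And>m. 0 < m \<Longrightarrow> m < d \<Longrightarrow> \<eta> ^ m \<noteq> 1"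
begin

lemma root_nonzero: "\<eta> \<noteq> 0"
  using order_pos root by (auto simp: power_0_left)

lemma power_int_eq_1_imp_dvd:
  assumes "\<eta> powi m = 1"
  shows "int d dvd m"
proof -
  define r where "r = m mod int d"
  have r_range: "0 \<le> r" "r < int d" using order_pos by (simp_all add: r_def)
  have "\<eta> powi m = (\<eta> ^ d) powi (m div int d) * \<eta> powi r"
    by (simp add: r_def power_int_power power_int_add[symmetric] root_nonzero)
  then have "\<eta> ^ nat r = 1"
    using assms root r_range by (metis nat_0_le power_int_of_nat power_int_1_left mult_1)
  then have "nat r = 0"
    using primitive r_range by (metis nat_less_iff neq0_conv)
  then show ?thesis
    using r_range by (simp add: r_def dvd_eq_mod_eq_0)
qed

lemma power_int_eq_imp_cong:
  assumes "\<eta> powi m = \<eta> powi n"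
  shows "[m = n] (mod int d)"
proof -
  have "\<eta> powi (m - n) = 1"
    using assms root_nonzero by (simp add: power_int_diff)
  then show ?thesis
    by (simp add: cong_iff_dvd_diff power_int_eq_1_imp_dvd)
qed

lemma power_int_root: "(\<eta> powi m) ^ d = 1"
proof -
  have "(\<eta> powi m) ^ d = (\<eta> ^ d) powi m"
    by (simp add: power_int_power power_int_power' mult.commute)
  then show ?thesis by (simp add: root)
qed

lemma scaled_by_powers_eq_imp_zero:
  assumes "\<eta> powi m * z = \<eta> powi n * z" and "\<not> [p = q] (mod int d)" and "m - n = p - q"
  shows "z = 0"
proof (rule ccontr)
  assume "z \<noteq> 0"
  then have "[m = n] (mod int d)"
    using assms(1) by (simp add: power_int_eq_imp_cong)
  then show False
    using assms(2,3) by (simp add: cong_iff_dvd_diff)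
qed

lemma L0_Int_L0:
  assumes "\<not> [a = a'] (mod int d)" and "\<not> [b = b'] (mod int d)"
  shows "L0 \<eta> a b \<inter> L0 \<eta> a' b' = {(0,0,0,0)}"
proof (rule Int_eq_originI)
  fix x y z w
  assume "(x,y,z,w) \<in> L0 \<eta> a b" "(x,y,z,w) \<in> L0 \<eta> a' b'"
  then have y: "y = \<eta> powi b * x" "y = \<eta> powi b' * x"
    and w: "w = \<eta> powi a * z" "w = \<eta> powi a' * z"
    by (simp_all add: L0_def)
  have "x = 0" using y assms(2) by (metis scaled_by_powers_eq_imp_zero)
  moreover have "z = 0" using w assms(1) by (metis scaled_by_powers_eq_imp_zero)
  ultimately show "x = 0 \<and> y = 0 \<and> z = 0 \<and> w = 0" using y w by simp
qed (simp_all add: L0_def)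

lemma L1_Int_L1:
  assumes "\<not> [b = b'] (mod int d)" and "\<not> [a + b = a' + b'] (mod int d)"
  shows "L1 \<eta> a b \<inter> L1 \<eta> a' b' = {(0,0,0,0)}"
proof (rule Int_eq_originI)
  fix x y z w
  assume "(x,y,z,w) \<in> L1 \<eta> a b" "(x,y,z,w) \<in> L1 \<eta> a' b'"
  then have x: "x = \<eta> powi (a + b) * z" "x = \<eta> powi (a' + b') * z"
    and y: "y = \<eta> powi b * w" "y = \<eta> powi b' * w"
    by (simp_all add: L1_def)
  have "z = 0" using x assms(2) by (metis scaled_by_powers_eq_imp_zero)
  moreover have "w = 0" using y assms(1) by (metis scaled_by_powers_eq_imp_zero)
  ultimately show "x = 0 \<and> y = 0 \<and> z = 0 \<and> w = 0" using x y by simp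
qed (simp_all add: L1_def)

lemma L2_Int_L2:
  assumes "\<not> [b = b'] (mod int d)" and "\<not> [a + b = a' + b'] (mod int d)"
  shows "L2 \<eta> a b \<inter> L2 \<eta> a' b' = {(0,0,0,0)}"
proof (rule Int_eq_originI)
  fix x y z w
  assume "(x,y,z,w) \<in> L2 \<eta> a b" "(x,y,z,w) \<in> L2 \<eta> a' b'"
  then have x: "x = - (\<eta> powi b * w)" "x = - (\<eta> powi b' * w)"
    and y: "y = - (\<eta> powi (a + b) * z)" "y = - (\<eta> powi (a' + b') * z)"
    by (simp_all add: L2_def vv_def)
  have "w = 0" using x assms(1) by (metis neg_equal_iff_equal scaled_by_powers_eq_imp_zero)
  moreover have "z = 0" using y assms(2) by (metis neg_equal_iff_equal scaled_by_powers_eq_imp_zero)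
  ultimately show "x = 0 \<and> y = 0 \<and> z = 0 \<and> w = 0" using x y by simp
qed (simp_all add: L2_def)

lemma L0_Int_L1:
  assumes "\<not> [a - b = a'] (mod int d)"
  shows "L0 \<eta> a b \<inter> L1 \<eta> a' b' = {(0,0,0,0)}"
proof (rule Int_eq_originI)
  fix x y z w
  assume in0: "(x,y,z,w) \<in> L0 \<eta> a b" and in1: "(x,y,z,w) \<in> L1 \<eta> a' b'"
  from in0 have y: "y = \<eta> powi b * x" and w: "w = \<eta> powi a * z" by (simp_all add: L0_def)
  from in1 have x: "x = \<eta> powi (a' + b') * z" and y': "y = \<eta> powi b' * w" by (simp_all add: L1_def)
  have "\<eta> powi (b' + a) * z = \<eta> powi b' * w"
    unfolding w by (simp add: power_int_add root_nonzero)
  also have "\<dots> = \<eta> powi b * x" using y y' by simp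
  also have "\<dots> = \<eta> powi (b + (a' + b')) * z"
    unfolding x by (simp add: power_int_add root_nonzero mult.assoc)
  finally have "z = 0" using assms by (rule scaled_by_powers_eq_imp_zero) simp
  then show "x = 0 \<and> y = 0 \<and> z = 0 \<and> w = 0" using x y w by simp
qed (simp_all add: L0_def L1_def)

lemma L0_Int_L2:
  assumes "\<not> [a + b = a'] (mod int d)"
  shows "L0 \<eta> a b \<inter> L2 \<eta> a' b' = {(0,0,0,0)}"
proof (rule Int_eq_originI)
  fix x y z w
  assume in0: "(x,y,z,w) \<in> L0 \<eta> a b" and in2: "(x,y,z,w) \<in> L2 \<eta> a' b'"
  from in0 have y: "y = \<eta> powi b * x" and w: "w = \<eta> powi a * z" by (simp_all add: L0_def)
  from in2 have x: "x = vv * \<eta> powi b' * w" and y': "y = vv * \<eta> powi (a' + b') * z"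
    by (simp_all add: L2_def)
  have "vv * (\<eta> powi (b + b' + a) * z) = \<eta> powi b * x"
    unfolding x w by (simp add: power_int_add root_nonzero mult_ac)
  also have "\<dots> = vv * (\<eta> powi (a' + b') * z)" using y y' by (simp add: mult.assoc)
  finally have "\<eta> powi (b + b' + a) * z = \<eta> powi (a' + b') * z" by (simp add: vv_def)
  then have "z = 0" using assms by (rule scaled_by_powers_eq_imp_zero) simp
  then show "x = 0 \<and> y = 0 \<and> z = 0 \<and> w = 0" using x y w by simp
qed (simp_all add: L0_def L2_def)

lemma L1_Int_L2:
  assumes "\<not> [a + 2*b = a' + 2*b'] (mod int d)"
  shows "L1 \<eta> a b \<inter> L2 \<eta> a' b' = {(0,0,0,0)}"
proof (rule Int_eq_originI)
  fix x y z w
  assume in1: "(x,y,z,w) \<in> L1 \<eta> a b" and in2: "(x,y,z,w) \<in> L2 \<eta> a' b'"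
  from in1 have x: "x = \<eta> powi (a + b) * z" and y: "y = \<eta> powi b * w" by (simp_all add: L1_def)
  from in2 have x': "x = vv * \<eta> powi b' * w" and y': "y = vv * \<eta> powi (a' + b') * z"
    by (simp_all add: L2_def)
  have "\<eta> powi (a + b + b) * z = \<eta> powi b * x"
    unfolding x by (subst power_int_add) (simp_all add: root_nonzero mult_ac)
  also have "\<dots> = vv * \<eta> powi b' * y" using x' y by simp
  also have "\<dots> = \<eta> powi (a' + b' + b') * z"
    unfolding y' by (subst power_int_add) (simp_all add: root_nonzero vv_def mult_ac)
  finally have "z = 0" using assms by (rule scaled_by_powers_eq_imp_zero) simp
  moreover have "w = 0" using x x' calculation root_nonzero by (simp add: vv_def)
  ultimately show "x = 0 \<and> y = 0 \<and> z = 0 \<and> w = 0" using x y by simp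
qed (simp_all add: L1_def L2_def)

lemma L0_subset_Fermat: "L0 \<eta> a b \<subseteq> Fermat d"
  by (auto simp: L0_def Fermat_def power_mult_distrib power_int_root)

lemma L1_subset_Fermat: "L1 \<eta> a b \<subseteq> Fermat d"
  by (auto simp: L1_def Fermat_def power_mult_distrib power_int_root)

lemma L2_subset_Fermat:
  assumes "odd d"
  shows "L2 \<eta> a b \<subseteq> Fermat d"
  using assms by (auto simp: L2_def vv_def Fermat_def power_mult_distrib power_int_root)

end

definition C0_snd :: "int \<Rightarrow> int \<Rightarrow> int" where
  "C0_snd k a = (if a \<le> k + 1 then a + 2*k - 1 else if a \<le> 2*k - 1 then a
     else if a \<le> 3*k then a - 2*k + 1 else a)"

definition C1_fst :: "int \<Rightarrow> int \<Rightarrow> int" where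
  "C1_fst k b = (if b < k then 2*k + 1 else if b < 2*k then 1 else if b = 2*k then 3*k + 1
     else if b < 3*k then 2*k + 1 else if b < 4*k then 2 else 3*k + 2)"

definition C2_fst :: "int \<Rightarrow> int \<Rightarrow> int" where
  "C2_fst k b = (if b < k then 1 else if b < 2*k then 2*k + 2 else if b < 3*k then 2 else 2*k + 2)"

lemma C0_eq_image:
  assumes "3 \<le> k"
  shows "C0 \<eta> k = (\<lambda>a. L0 \<eta> a (C0_snd k a)) ` {1..4*k+1}" (is "_ = ?line ` _")
proof -
  have "{1..4*k+1} = {0+1..k+1} \<union> {2+k..(k-1)+k} \<union> {0+2*k..k+2*k} \<union> {1+3*k..(k+1)+3*k}"
    using assms by auto
  moreover have "(\<lambda>i. L0 \<eta> (1+i) (2*k+i)) ` {0..k} = ?line ` {0+1..k+1}"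
    by (rule image_int_interval_shift) (use assms in \<open>auto simp: C0_snd_def algebra_simps\<close>)
  moreover have "(\<lambda>i. L0 \<eta> (k+i) (k+i)) ` {2..k-1} = ?line ` {2+k..(k-1)+k}"
    by (rule image_int_interval_shift) (use assms in \<open>auto simp: C0_snd_def algebra_simps\<close>)
  moreover have "(\<lambda>i. L0 \<eta> (2*k+i) (1+i)) ` {0..k} = ?line ` {0+2*k..k+2*k}"
    by (rule image_int_interval_shift) (use assms in \<open>auto simp: C0_snd_def algebra_simps\<close>)
  moreover have "(\<lambda>i. L0 \<eta> (3*k+i) (3*k+i)) ` {1..k+1} = ?line ` {1+3*k..(k+1)+3*k}"
    by (rule image_int_interval_shift) (use assms in \<open>auto simp: C0_snd_def algebra_simps\<close>)
  ultimately show ?thesis unfolding C0_def by (simp only: image_Un)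
qed

lemma C1_eq_image:
  assumes "3 \<le> k"
  shows "C1 \<eta> k = (\<lambda>b. L1 \<eta> (C1_fst k b) b) ` {0..4*k}" (is "_ = ?line ` _")
proof -
  have "{0..4*k} = {1+2*k..(k-1)+2*k} \<union> {2*k..2*k} \<union> {0+k..(k-1)+k} \<union> {0+0..(k-1)+0}
      \<union> {4*k..4*k} \<union> {0+3*k..(k-1)+3*k}"
    using assms by auto
  moreover have "(\<lambda>i. L1 \<eta> (2*k+1) (2*k+i)) ` {1..k-1} = ?line ` {1+2*k..(k-1)+2*k}"
    by (rule image_int_interval_shift) (use assms in \<open>auto simp: C1_fst_def algebra_simps\<close>)
  moreover have "{L1 \<eta> (3*k+1) (2*k)} = ?line ` {2*k..2*k}"
    using assms by (simp add: C1_fst_def)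
  moreover have "(\<lambda>i. L1 \<eta> 1 (k+i)) ` {0..k-1} = ?line ` {0+k..(k-1)+k}"
    by (rule image_int_interval_shift) (use assms in \<open>auto simp: C1_fst_def algebra_simps\<close>)
  moreover have "(\<lambda>i. L1 \<eta> (2*k+1) i) ` {0..k-1} = ?line ` {0+0..(k-1)+0}"
    by (rule image_int_interval_shift) (use assms in \<open>auto simp: C1_fst_def algebra_simps\<close>)
  moreover have "{L1 \<eta> (3*k+2) (4*k)} = ?line ` {4*k..4*k}"
    using assms by (simp add: C1_fst_def)
  moreover have "(\<lambda>i. L1 \<eta> 2 (3*k+i)) ` {0..k-1} = ?line ` {0+3*k..(k-1)+3*k}"
    by (rule image_int_interval_shift) (use assms in \<open>auto simp: C1_fst_def algebra_simps\<close>)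
  ultimately show ?thesis unfolding C1_def by (simp only: image_Un)
qed

lemma C2_eq_image:
  assumes "3 \<le> k"
  shows "C2 \<eta> k = (\<lambda>b. L2 \<eta> (C2_fst k b) b) ` {0..4*k}" (is "_ = ?line ` _")
proof -
  have "{0..4*k} = {0+0..(k-1)+0} \<union> {0+3*k..k+3*k} \<union> {0+2*k..(k-1)+2*k} \<union> {0+k..(k-1)+k}"
    using assms by auto
  moreover have "(\<lambda>i. L2 \<eta> 1 i) ` {0..k-1} = ?line ` {0+0..(k-1)+0}"
    by (rule image_int_interval_shift) (use assms in \<open>auto simp: C2_fst_def algebra_simps\<close>)
  moreover have "(\<lambda>i. L2 \<eta> (2*k+2) (3*k+i)) ` {0..k} = ?line ` {0+3*k..k+3*k}"
    by (rule image_int_interval_shift) (use assms in \<open>auto simp: C2_fst_def algebra_simps\<close>)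
  moreover have "(\<lambda>i. L2 \<eta> 2 (2*k+i)) ` {0..k-1} = ?line ` {0+2*k..(k-1)+2*k}"
    by (rule image_int_interval_shift) (use assms in \<open>auto simp: C2_fst_def algebra_simps\<close>)
  moreover have "(\<lambda>i. L2 \<eta> (2*k+2) (k+i)) ` {0..k-1} = ?line ` {0+k..(k-1)+k}"
    by (rule image_int_interval_shift) (use assms in \<open>auto simp: C2_fst_def algebra_simps\<close>)
  ultimately show ?thesis unfolding C2_def by (simp only: image_Un)
qed

context
  fixes k :: int
  assumes k_ge_3: "3 \<le> k"
begin

lemma C0_residues_distinct:
  assumes "a \<in> {1..4*k+1}" "a' \<in> {1..4*k+1}" "a \<noteq> a'"
  shows "\<not> [a = a'] (mod 4*k+1)" "\<not> [C0_snd k a = C0_snd k a'] (mod 4*k+1)"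
  using assms k_ge_3 unfolding C0_snd_def
  by (intro not_cong_if_bounded_diff; auto split: if_splits)+

lemma C1_residues_distinct:
  assumes "b \<in> {0..4*k}" "b' \<in> {0..4*k}" "b \<noteq> b'"
  shows "\<not> [b = b'] (mod 4*k+1)" "\<not> [C1_fst k b + b = C1_fst k b' + b'] (mod 4*k+1)"
  using assms k_ge_3 unfolding C1_fst_def
  by (intro not_cong_if_bounded_diff; auto split: if_splits)+

lemma C2_residues_distinct:
  assumes "b \<in> {0..4*k}" "b' \<in> {0..4*k}" "b \<noteq> b'"
  shows "\<not> [b = b'] (mod 4*k+1)" "\<not> [C2_fst k b + b = C2_fst k b' + b'] (mod 4*k+1)"
  using assms k_ge_3 unfolding C2_fst_def
  by (intro not_cong_if_bounded_diff; auto split: if_splits)+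

lemma C0_C1_residues_distinct:
  assumes "a \<in> {1..4*k+1}" "b \<in> {0..4*k}"
  shows "\<not> [a - C0_snd k a = C1_fst k b] (mod 4*k+1)"
  using assms k_ge_3 unfolding C0_snd_def C1_fst_def
  by (intro not_cong_if_bounded_diff; auto split: if_splits)

lemma C0_C2_residues_distinct:
  assumes "a \<in> {1..4*k+1}" "b \<in> {0..4*k}"
  shows "\<not> [a + C0_snd k a = C2_fst k b] (mod 4*k+1)"
  using assms k_ge_3 unfolding C0_snd_def C2_fst_def
  by (intro not_cong_if_bounded_diff; auto split: if_splits; presburger)

lemma C1_C2_residues_distinct:
  assumes "b \<in> {0..4*k}" "b' \<in> {0..4*k}"
  shows "\<not> [C1_fst k b + 2*b = C2_fst k b' + 2*b'] (mod 4*k+1)"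
  using assms k_ge_3 unfolding C1_fst_def C2_fst_def
  by (intro not_cong_if_bounded_diff; auto split: if_splits; presburger)

end

definition config_index :: "int \<Rightarrow> (nat \<times> int) set" where
  "config_index k = {0} \<times> {1..4*k+1} \<union> {1} \<times> {0..4*k} \<union> {2} \<times> {0..4*k}"

definition config_line :: "complex \<Rightarrow> int \<Rightarrow> nat \<times> int \<Rightarrow> vec4 set" where
  "config_line \<eta> k = (\<lambda>(j, t). if j = 0 then L0 \<eta> t (C0_snd k t)
     else if j = 1 then L1 \<eta> (C1_fst k t) t else L2 \<eta> (C2_fst k t) t)"

lemma card_config_index:
  assumes "0 \<le> k"
  shows "card (config_index k) = 3 * nat (4*k+1)"
  unfolding config_index_def using assms by (subst card_Un_disjoint, auto)+

lemma C0_C1_C2_eq_config_image: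
  assumes "3 \<le> k"
  shows "C0 \<eta> k \<union> C1 \<eta> k \<union> C2 \<eta> k = config_line \<eta> k ` config_index k"
proof -
  have slice: "f ` ({j} \<times> A) = (\<lambda>t. f (j, t)) ` A" for f :: "nat \<times> int \<Rightarrow> vec4 set" and j A
    by force
  show ?thesis
    using assms unfolding config_index_def image_Un slice
    by (simp add: config_line_def C0_eq_image C1_eq_image C2_eq_image)
qed

lemma config_line_ne_origin: "config_line \<eta> k p \<noteq> {(0,0,0,0)}"
  by (auto simp: config_line_def L0_ne_origin L1_ne_origin L2_ne_origin split: prod.splits)

context primitive_root_of_unity
begin

lemma config_line_subset_Fermat:
  assumes "odd d"
  shows "config_line \<eta> k p \<subseteq> Fermat d"
  using assms L0_subset_Fermat L1_subset_Fermat L2_subset_Fermat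
  by (auto simp: config_line_def split: prod.splits)

lemma config_lines_meet_in_origin:
  assumes k: "3 \<le> k" and d: "int d = 4*k+1"
    and "p \<in> config_index k" "q \<in> config_index k" "p \<noteq> q"
  shows "config_line \<eta> k p \<inter> config_line \<eta> k q = {(0,0,0,0)}"
proof -
  have ordered: "config_line \<eta> k (i, s) \<inter> config_line \<eta> k (j, t) = {(0,0,0,0)}"
    if "(i, s) \<in> config_index k" "(j, t) \<in> config_index k" "(i, s) \<noteq> (j, t)" "i \<le> j" for i j s t
  proof -
    from that consider
        "i = 0" "j = 0" "s \<in> {1..4*k+1}" "t \<in> {1..4*k+1}" "s \<noteq> t"
      | "i = 0" "j = 1" "s \<in> {1..4*k+1}" "t \<in> {0..4*k}"
      | "i = 0" "j = 2" "s \<in> {1..4*k+1}" "t \<in> {0..4*k}"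
      | "i = 1" "j = 1" "s \<in> {0..4*k}" "t \<in> {0..4*k}" "s \<noteq> t"
      | "i = 1" "j = 2" "s \<in> {0..4*k}" "t \<in> {0..4*k}"
      | "i = 2" "j = 2" "s \<in> {0..4*k}" "t \<in> {0..4*k}" "s \<noteq> t"
      unfolding config_index_def by auto
    then show ?thesis
    proof cases
      case 1
      then show ?thesis
        using C0_residues_distinct[OF k] by (simp add: config_line_def d L0_Int_L0)
    next
      case 2
      then show ?thesis
        using C0_C1_residues_distinct[OF k] by (simp add: config_line_def d L0_Int_L1)
    next
      case 3
      then show ?thesis
        using C0_C2_residues_distinct[OF k] by (simp add: config_line_def d L0_Int_L2)
    next
      case 4
      then show ?thesis
        using C1_residues_distinct[OF k] by (simp add: config_line_def d L1_Int_L1)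
    next
      case 5
      then show ?thesis
        using C1_C2_residues_distinct[OF k] by (simp add: config_line_def d L1_Int_L2)
    next
      case 6
      then show ?thesis
        using C2_residues_distinct[OF k] by (simp add: config_line_def d L2_Int_L2)
    qed
  qed
  obtain i s j t where "p = (i, s)" "q = (j, t)" by force
  with assms ordered[of i s j t] ordered[of j t i s] show ?thesis
    by (cases "i \<le> j") (auto simp: Int_commute)
qed

end

theorem proposition4p4:
  fixes k :: int and d :: nat and \<eta> :: complex
  assumes "k \<ge> 3" and "int d = 4*k + 1"
    and "\<eta> ^ d = 1" and "\<forall>m::nat. 0 < m \<and> m < d \<longrightarrow> \<eta> ^ m \<noteq> 1"
  shows "card (C0 \<eta> k \<union> C1 \<eta> k \<union> C2 \<eta> k) = 3 * d
       \<and> (\<forall>L \<in> C0 \<eta> k \<union> C1 \<eta> k \<union> C2 \<eta> k. L \<subseteq> Fermat d)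
       \<and> (\<forall>L \<in> C0 \<eta> k \<union> C1 \<eta> k \<union> C2 \<eta> k. \<forall>L' \<in> C0 \<eta> k \<union> C1 \<eta> k \<union> C2 \<eta> k.
            L \<noteq> L' \<longrightarrow> L \<inter> L' = {(0,0,0,0)})"
proof -
  interpret primitive_root_of_unity d \<eta>
    using assms by unfold_locales auto
  let ?I = "config_index k" and ?line = "config_line \<eta> k"
  have lines: "C0 \<eta> k \<union> C1 \<eta> k \<union> C2 \<eta> k = ?line ` ?I"
    using assms(1) by (rule C0_C1_C2_eq_config_image)
  have meet: "?line p \<inter> ?line q = {(0,0,0,0)}" if "p \<in> ?I" "q \<in> ?I" "p \<noteq> q" for p q
    using config_lines_meet_in_origin assms(1,2) that by blast
  have "inj_on ?line ?I"
    using meet config_line_ne_origin by (rule inj_on_if_pairwise_Int_singleton)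
  then have "card (C0 \<eta> k \<union> C1 \<eta> k \<union> C2 \<eta> k) = 3 * d"
    using assms(1,2) by (simp add: lines card_image card_config_index)
  moreover have "odd d"
    using assms(2) by presburger
  then have "\<forall>L \<in> C0 \<eta> k \<union> C1 \<eta> k \<union> C2 \<eta> k. L \<subseteq> Fermat d"
    by (simp add: lines config_line_subset_Fermat)
  moreover have "\<forall>L \<in> C0 \<eta> k \<union> C1 \<eta> k \<union> C2 \<eta> k. \<forall>L' \<in> C0 \<eta> k \<union> C1 \<eta> k \<union> C2 \<eta> k.
      L \<noteq> L' \<longrightarrow> L \<inter> L' = {(0,0,0,0)}"
    unfolding lines using meet by blast
  ultimately show ?thesis by blast
qed

end
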